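(* Assume the setting of the context. Let $m\geq 0$ and $0\le k<hl^m$, and write $k=\sum_{i=0}^m k_il^i$ with $0\le k_m<h$ and $0\le k_i<l$ for $0\le i<m$. Then $$\{y_{k+nhl^m} : n\in\mathbb Z\}=\phi(\mathcal C),$$ where $\mathcal C$ is the terminal vertex of the (unique) walk in $G(\sigma)$ that starts at $\mathcal A_{k_m}$ and successively follows edges labelled $k_{m-1},k_{m-2},\dots,k_0$.
   Context: Let $\sigma:\mathcal A^*\to\mathcal A^*$ be a primitive substitution of constant length $l\ge2$ ($|\sigma(a)|=l$ for all $a$), $x\in\mathcal A^{\mathbb Z}$ an admissible two-sided fixed point of $\sigma$ (so $x_{lj+i}=\sigma(x_j)_i$ for $j\in\mathbb Z$, $0\le i<l$, where $w_i$ denotes the $i$-th letter of $w$ indexed from $0$), $\phi:\mathcal A\to\mathcal B$ a coding, $y=\phi(x)$; $(X,S)$ is the subshift generated by $x$, assumed non-periodic. The height is $h=\max\{n\ge1 : \gcd(n,l)=1,\ n \mid g_0\}$ where $g_0=\gcd\{n\ge1 : x_n=x_0\}$. For $0\le i<h$, $\mathcal A_i=\{x_{i+nh}:n\in\mathbb Z\}$; these sets partition $\mathcal A$. The graph $G(\sigma)$: vertices are subsets of $\mathcal A$; for a subset $\mathcal C$ and $0\le i<l$ there is an edge labelled $i$ from $\mathcal C$ to $\{\sigma(b)_i : b\in\mathcal C\}$; $G(\sigma)$ is restricted to the vertices reachable from $\mathcal A_0,\dots,\mathcal A_{h-1}$. For $\mathcal C\subseteq\mathcal A$, $\phi(\mathcal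 C)=\{\phi(c):c\in\mathcal C\}$. *)

theory Defs
  imports Main
begin

definition subst_word :: "('a \<Rightarrow> 'a list) \<Rightarrow> 'a list \<Rightarrow> 'a list" where
  "subst_word \<sigma> w = concat (map \<sigma> w)"

definition subst_iter :: "('a \<Rightarrow> 'a list) \<Rightarrow> nat \<Rightarrow> 'a list \<Rightarrow> 'a list" where
  "subst_iter \<sigma> n = (subst_word \<sigma> ^^ n)"

definition constant_length :: "('a \<Rightarrow> 'a list) \<Rightarrow> nat \<Rightarrow> bool" where
  "constant_length \<sigma> l \<longleftrightarrow> (\<forall>a. length (\<sigma> a) = l)"

definition primitive :: "('a \<Rightarrow> 'a list) \<Rightarrow> bool" where
  "primitive \<sigma> \<longleftrightarrow> (\<exists>n\<ge>1. \<forall>a b. b \<in> set (subst_iter \<sigma> n [a]))"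

definition is_fixed_point :: "('a \<Rightarrow> 'a list) \<Rightarrow> nat \<Rightarrow> (int \<Rightarrow> 'a) \<Rightarrow> bool" where
  "is_fixed_point \<sigma> l x \<longleftrightarrow>
     (\<forall>j::int. \<forall>i<l. x (int l * j + int i) = \<sigma> (x j) ! i)"

definition admissible :: "('a \<Rightarrow> 'a list) \<Rightarrow> (int \<Rightarrow> 'a) \<Rightarrow> bool" where
  "admissible \<sigma> x \<longleftrightarrow>
     (\<exists>n a u v. subst_iter \<sigma> n [a] = u @ [x (-1), x 0] @ v)"

definition subshift_of :: "(int \<Rightarrow> 'a) \<Rightarrow> (int \<Rightarrow> 'a) set" where
  "subshift_of x = {z. \<forall>(i::int) (n::nat). \<exists>j::int. \<forall>t<n. z (i + int t) = x (j + int t)}"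

definition periodic_seq :: "(int \<Rightarrow> 'a) \<Rightarrow> bool" where
  "periodic_seq z \<longleftrightarrow> (\<exists>p::int. p > 0 \<and> (\<forall>n. z (n + p) = z n))"

definition nonperiodic_subshift :: "(int \<Rightarrow> 'a) \<Rightarrow> bool" where
  "nonperiodic_subshift x \<longleftrightarrow> (\<forall>z\<in>subshift_of x. \<not> periodic_seq z)"

definition g0 :: "(int \<Rightarrow> 'a) \<Rightarrow> nat" where
  "g0 x = Gcd {n::nat. n \<ge> 1 \<and> x (int n) = x 0}"

definition height :: "nat \<Rightarrow> (int \<Rightarrow> 'a) \<Rightarrow> nat" where
  "height l x = (GREATEST n::nat. n \<ge> 1 \<and> coprime n l \<and> n dvd g0 x)"

definition A_class :: "nat \<Rightarrow> (int \<Rightarrow> 'a) \<Rightarrow> nat \<Rightarrow> 'a set" where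
  "A_class h x i = {x (int i + n * int h) | n::int. True}"

text \<open>Edge labelled i in G(sigma) from vertex C.\<close>
definition G_step :: "('a \<Rightarrow> 'a list) \<Rightarrow> 'a set \<Rightarrow> nat \<Rightarrow> 'a set" where
  "G_step \<sigma> C i = (\<lambda>b. \<sigma> b ! i) ` C"

definition walk_end :: "('a \<Rightarrow> 'a list) \<Rightarrow> 'a set \<Rightarrow> nat list \<Rightarrow> 'a set" where
  "walk_end \<sigma> C ls = foldl (G_step \<sigma>) C ls"

end

theory Submission
  imports Defs
begin

text \<open>Reading the base-l expansion of k from the top digit down, each step
  l * j + i of the expansion is one application of the fixed-point equation
  x (l * j + i) = \<sigma> (x j) ! i. Hence the values of x on the progression
  k + h l^m \<int> are obtained from the values on the coarser progression
  (k div l) + h l^(m-1) \<int> by the edge of G(\<sigma>) labelled k mod l; after m steps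
  one arrives at the progression k_m + h \<int>, whose value set is \<A>_{k_m}.\<close>

lemma fixed_point_nth:
  assumes "is_fixed_point \<sigma> l x" and "i < l"
  shows "x (int l * j + int i) = \<sigma> (x j) ! i"
  using assms unfolding is_fixed_point_def by blast

lemma G_step_progression:
  assumes "is_fixed_point \<sigma> l x" and "i < l"
  shows "G_step \<sigma> {x (a + n * d) | n::int. True} i
       = {x (int i + int l * a + n * (int l * d)) | n::int. True}"
proof -
  have "x (int i + int l * a + n * (int l * d)) = \<sigma> (x (a + n * d)) ! i" for n
    using fixed_point_nth[OF assms, of "a + n * d"] by (simp add: algebra_simps)
  then show ?thesis
    unfolding G_step_def by auto
qed

lemma walk_end_snoc: "walk_end \<sigma> C (ls @ [i]) = G_step \<sigma> (walk_end \<sigma> C ls) i"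
  by (simp add: walk_end_def)

lemma rev_upt_Suc_map_Suc: "rev [0..<Suc m] = map Suc (rev [0..<m]) @ [0]"
  by (simp add: upt_conv_Cons map_Suc_upt[symmetric] rev_map del: upt_Suc)

lemma digit_sum_Suc:
  fixes kd :: "nat \<Rightarrow> nat" and l :: nat
  shows "(\<Sum>i\<le>Suc m. kd i * l ^ i) = kd 0 + l * (\<Sum>i\<le>m. kd (Suc i) * l ^ i)"
proof -
  have "(\<Sum>i\<le>Suc m. kd i * l ^ i) = kd 0 + (\<Sum>i\<le>m. kd (Suc i) * l ^ Suc i)"
    by (simp only: sum.atMost_Suc_shift) simp
  also have "\<dots> = kd 0 + l * (\<Sum>i\<le>m. kd (Suc i) * l ^ i)"
    by (simp add: sum_distrib_left algebra_simps)
  finally show ?thesis .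
qed

lemma progression_values_eq_walk_end:
  assumes fp: "is_fixed_point \<sigma> l x" and digits: "\<forall>i<m. kd i < l"
  shows "{x (int (\<Sum>i\<le>m. kd i * l ^ i) + n * int h * int l ^ m) | n::int. True}
       = walk_end \<sigma> (A_class h x (kd m)) (map kd (rev [0..<m]))"
  using digits
proof (induction m arbitrary: kd)
  case 0
  then show ?case by (simp add: walk_end_def A_class_def)
next
  case (Suc m)
  let ?kd' = "\<lambda>i. kd (Suc i)"
  let ?s = "\<Sum>i\<le>m. ?kd' i * l ^ i"
  have IH: "{x (int ?s + n * int h * int l ^ m) | n::int. True}
      = walk_end \<sigma> (A_class h x (kd (Suc m))) (map ?kd' (rev [0..<m]))"
    using Suc by simp
  have "{x (int (\<Sum>i\<le>Suc m. kd i * l ^ i) + n * int h * int l ^ Suc m) | n::int. True}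
      = {x (int (kd 0) + int l * int ?s + n * (int l * (int h * int l ^ m))) | n::int. True}"
  proof -
    have "int (\<Sum>i\<le>Suc m. kd i * l ^ i) + n * int h * int l ^ Suc m
        = int (kd 0) + int l * int ?s + n * (int l * (int h * int l ^ m))" for n
      by (simp only: digit_sum_Suc of_nat_add of_nat_mult) (simp add: algebra_simps)
    then show ?thesis by (simp only:)
  qed
  also have "\<dots> = G_step \<sigma> {x (int ?s + n * (int h * int l ^ m)) | n::int. True} (kd 0)"
    using G_step_progression[OF fp] Suc.prems by simp
  also have "\<dots> = walk_end \<sigma> (A_class h x (kd (Suc m))) (map kd (rev [0..<Suc m]))"
    unfolding rev_upt_Suc_map_Suc map_append list.map walk_end_snoc IH[unfolded mult.assoc]
    by (simp add: comp_def)
  finally show ?case .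
qed

theorem mainTheorem13:
  fixes \<sigma> :: "'a::finite \<Rightarrow> 'a list"
    and l :: nat
    and x :: "int \<Rightarrow> 'a"
    and \<phi> :: "'a \<Rightarrow> 'b"
    and m k :: nat
    and kd :: "nat \<Rightarrow> nat"
  assumes "l \<ge> 2"
    and "constant_length \<sigma> l"
    and "primitive \<sigma>"
    and "is_fixed_point \<sigma> l x"
    and "admissible \<sigma> x"
    and "nonperiodic_subshift x"
    and "k < height l x * l ^ m"
    and "k = (\<Sum>i\<le>m. kd i * l ^ i)"
    and "kd m < height l x"
    and "\<forall>i<m. kd i < l"
  shows "{\<phi> (x (int k + n * int (height l x) * int l ^ m)) | n::int. True}
         = \<phi> ` walk_end \<sigma> (A_class (height l x) x (kd m)) (map kd (rev [0..<m]))"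
proof -
  have x_values: "{x (int k + n * int (height l x) * int l ^ m) | n::int. True}
      = walk_end \<sigma> (A_class (height l x) x (kd m)) (map kd (rev [0..<m]))"
    using progression_values_eq_walk_end[OF assms(4,10)] assms(8) by simp
  show ?thesis
    unfolding x_values[symmetric] by blast
qed

end
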